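(* Let $0<\varepsilon\le1/2$, $k$ a positive integer and $OPT\ge0$. Let $X\subset\mathbb{R}^d$ be a finite nonempty (multi)set and $C\subset\mathbb{R}^d$ a finite nonempty set with $\Phi(C,X)\le\frac{\varepsilon}{6k}\,OPT$. For each $x\in X$ let $c(x)\in C$ be a nearest point of $C$ to $x$, and let $X'=\{c(x):x\in X\}$ (as a multiset). If $m''\in\mathbb{R}^d$ satisfies $\Phi(m'',X')\le(1+\frac\varepsilon8)\Delta(X')$, then $$\Phi(m'',X)\le\left(1+\frac\varepsilon2\right)\Delta(X) + \frac{\varepsilon}{2k}\,OPT.$$
   Context: $\mu(Y)$ denotes the centroid of a finite multiset $Y$, $\Delta(Y)=\sum_{y\in Y}\|y-\mu(Y)\|^2$. For a point $p$, $\Phi(p,Y) = \sum_{y\in Y}\|y-p\|^2$; for a finite set $C$, $\Phi(C,Y) = \sum_{y\in Y}\min_{c\in C}\|y-c\|^2$. *)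

theory Defs
  imports "HOL-Analysis.Analysis" "HOL-Library.Multiset"
begin

definition centroid :: "'a::euclidean_space multiset \<Rightarrow> 'a" where
  "centroid Y = (1 / real (size Y)) *\<^sub>R (\<Sum>\<^sub># Y)"

definition Phi_pt :: "'a::euclidean_space \<Rightarrow> 'a multiset \<Rightarrow> real" where
  "Phi_pt p Y = (\<Sum>y\<in>#Y. (norm (y - p))\<^sup>2)"

definition Delta :: "'a::euclidean_space multiset \<Rightarrow> real" where
  "Delta Y = Phi_pt (centroid Y) Y"

definition Phi_set :: "'a::euclidean_space set \<Rightarrow> 'a multiset \<Rightarrow> real" where
  "Phi_set C Y = (\<Sum>y\<in>#Y. Min ((\<lambda>c. (norm (y - c))\<^sup>2) ` C))"

end

theory Submission
  imports Defs
begin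

text \<open>Write \<open>X'\<close> for the image of \<open>X\<close> under the nearest-centre map \<open>c\<close> and
  \<open>E = \<Phi>(C, X) = \<Sum>x\<in>X. \<parallel>x - c x\<parallel>\<^sup>2\<close>. By the parallel axis theorem
  \<open>\<Phi>(p, Y) = \<Delta>(Y) + |Y| \<parallel>p - \<mu>(Y)\<parallel>\<^sup>2\<close>, so everything reduces to bounding
  \<open>|X| \<parallel>m - \<mu>(X)\<parallel>\<^sup>2\<close>. Moving every point by at most its displacement to \<open>c x\<close>
  gives \<open>\<Delta>(X') \<le> 2\<Delta>(X) + 2E\<close> and \<open>|X| \<parallel>\<mu>(X') - \<mu>(X)\<parallel>\<^sup>2 \<le> E\<close>, while the
  hypothesis on \<open>m\<close> gives \<open>|X| \<parallel>m - \<mu>(X')\<parallel>\<^sup>2 \<le> \<epsilon>/8 \<Delta>(X')\<close>; combining these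
  with \<open>\<parallel>a + b\<parallel>\<^sup>2 \<le> 2\<parallel>a\<parallel>\<^sup>2 + 2\<parallel>b\<parallel>\<^sup>2\<close> yields the claim.\<close>

lemma Phi_pt_nonneg: "0 \<le> Phi_pt p Y"
  unfolding Phi_pt_def by (induction Y) auto

lemma Delta_nonneg: "0 \<le> Delta Y"
  by (simp add: Delta_def Phi_pt_nonneg)

lemma Phi_pt_expand:
  "Phi_pt p Y = (\<Sum>y\<in>#Y. (norm y)\<^sup>2) - 2 * inner (\<Sum>\<^sub># Y) p + real (size Y) * (norm p)\<^sup>2"
proof (induction Y)
  case empty
  then show ?case by (simp add: Phi_pt_def)
next
  case (add a Y)
  have "(norm (a - p))\<^sup>2 = (norm a)\<^sup>2 - 2 * inner a p + (norm p)\<^sup>2"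
    by (simp add: power2_norm_eq_inner inner_diff_left inner_diff_right inner_commute)
  then show ?case using add by (simp add: Phi_pt_def inner_add_left algebra_simps)
qed

lemma Phi_pt_eq_Delta_plus_dist_centroid:
  assumes "Y \<noteq> {#}"
  shows "Phi_pt p Y = Delta Y + real (size Y) * (norm (p - centroid Y))\<^sup>2"
proof -
  define n where "n = real (size Y)"
  define S where "S = \<Sum>\<^sub># Y"
  have n: "n > 0" using assms by (simp add: n_def nonempty_has_size)
  have centroid: "centroid Y = (1/n) *\<^sub>R S" by (simp add: centroid_def n_def S_def)
  have dist_expand:
    "(norm (p - (1/n) *\<^sub>R S))\<^sup>2 = (norm p)\<^sup>2 - 2/n * inner S p + (norm S)\<^sup>2 / n^2"
    using n by (simp only: power2_norm_eq_inner)
      (simp add: inner_diff_left inner_diff_right inner_commute field_simps power2_eq_square)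
  have "- 2 * inner S p + n * (norm p)\<^sup>2 =
        - 2 * inner S ((1/n) *\<^sub>R S) + n * (norm ((1/n) *\<^sub>R S))\<^sup>2 + n * (norm (p - (1/n) *\<^sub>R S))\<^sup>2"
    unfolding dist_expand using n
    by (simp add: power_divide power2_norm_eq_inner[symmetric] field_simps power2_eq_square)
  then show ?thesis
    unfolding Delta_def by (subst (1 2) Phi_pt_expand) (simp add: centroid n_def S_def)
qed

lemma Delta_le_Phi_pt:
  assumes "Y \<noteq> {#}"
  shows "Delta Y \<le> Phi_pt p Y"
  using Phi_pt_eq_Delta_plus_dist_centroid[OF assms, of p] by simp

lemma norm_add_squared_le: "(norm (a + b))\<^sup>2 \<le> 2 * (norm a)\<^sup>2 + 2 * (norm (b::'a::real_normed_vector))\<^sup>2"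
proof -
  have "(norm (a + b))\<^sup>2 \<le> (norm a + norm b)\<^sup>2"
    by (simp add: norm_triangle_ineq power_mono)
  also have "\<dots> \<le> 2 * (norm a)\<^sup>2 + 2 * (norm b)\<^sup>2"
    by (smt (verit) power2_sum sum_squares_bound)
  finally show ?thesis .
qed

lemma Phi_set_eq_nearest:
  assumes "finite C"
    and "\<forall>x\<in>#X. c x \<in> C \<and> (\<forall>z\<in>C. norm (x - c x) \<le> norm (x - z))"
  shows "Phi_set C X = (\<Sum>x\<in>#X. (norm (x - c x))\<^sup>2)"
  unfolding Phi_set_def
proof (rule arg_cong[where f = sum_mset], rule image_mset_cong)
  fix x assume x: "x \<in># X"
  show "Min ((\<lambda>z. (norm (x - z))\<^sup>2) ` C) = (norm (x - c x))\<^sup>2"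
    using assms x by (intro Min_eqI) (auto simp: power_mono)
qed

lemma centroid_image_diff:
  "centroid (image_mset f X) - centroid X = centroid (image_mset (\<lambda>x. f x - x) X)"
proof -
  have "\<Sum>\<^sub># (image_mset (\<lambda>x. f x - x) X) = \<Sum>\<^sub># (image_mset f X) - \<Sum>\<^sub># X"
    by (induction X) (auto simp: algebra_simps)
  then show ?thesis by (simp add: centroid_def scaleR_diff_right)
qed

lemma Delta_image_le:
  assumes "X \<noteq> {#}"
  shows "Delta (image_mset f X) \<le> 2 * Delta X + 2 * (\<Sum>x\<in>#X. (norm (x - f x))\<^sup>2)"
proof -
  let ?\<mu> = "centroid X"
  have "Delta (image_mset f X) \<le> Phi_pt ?\<mu> (image_mset f X)"
    using assms by (simp add: Delta_le_Phi_pt)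
  also have "\<dots> = (\<Sum>x\<in>#X. (norm ((x - ?\<mu>) + (f x - x)))\<^sup>2)"
    by (simp add: Phi_pt_def image_mset.compositionality o_def)
  also have "\<dots> \<le> (\<Sum>x\<in>#X. 2 * (norm (x - ?\<mu>))\<^sup>2 + 2 * (norm (x - f x))\<^sup>2)"
    by (rule sum_mset_mono) (metis norm_minus_commute norm_add_squared_le)
  also have "\<dots> = 2 * Delta X + 2 * (\<Sum>x\<in>#X. (norm (x - f x))\<^sup>2)"
    by (simp add: sum_mset.distrib sum_mset_distrib_left Delta_def Phi_pt_def)
  finally show ?thesis .
qed

lemma size_mult_dist_centroid_image_le:
  assumes "X \<noteq> {#}"
  shows "real (size X) * (norm (centroid (image_mset f X) - centroid X))\<^sup>2
           \<le> (\<Sum>x\<in>#X. (norm (x - f x))\<^sup>2)"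
proof -
  let ?e = "image_mset (\<lambda>x. f x - x) X"
  have "Phi_pt 0 ?e = Delta ?e + real (size X) * (norm (centroid ?e))\<^sup>2"
    using Phi_pt_eq_Delta_plus_dist_centroid[of ?e 0] assms by simp
  moreover have "Phi_pt 0 ?e = (\<Sum>x\<in>#X. (norm (x - f x))\<^sup>2)"
    by (simp add: Phi_pt_def image_mset.compositionality o_def norm_minus_commute)
  ultimately show ?thesis
    using Delta_nonneg[of ?e] by (simp add: centroid_image_diff)
qed

lemma Phi_pt_le_of_approx_optimal_for_image:
  assumes "X \<noteq> {#}" and "0 \<le> \<delta>"
    and approx: "Phi_pt m (image_mset f X) \<le> (1 + \<delta>) * Delta (image_mset f X)"
  shows "Phi_pt m X \<le> (1 + 4 * \<delta>) * Delta X + (2 + 4 * \<delta>) * (\<Sum>x\<in>#X. (norm (x - f x))\<^sup>2)"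
proof -
  define n where "n = real (size X)"
  define E where "E = (\<Sum>x\<in>#X. (norm (x - f x))\<^sup>2)"
  define \<mu> where "\<mu> = centroid X"
  define \<mu>' where "\<mu>' = centroid (image_mset f X)"
  have image_ne: "image_mset f X \<noteq> {#}" using assms(1) by simp
  have "n \<ge> 0" by (simp add: n_def)
  have "Phi_pt m (image_mset f X) = Delta (image_mset f X) + n * (norm (m - \<mu>'))\<^sup>2"
    using Phi_pt_eq_Delta_plus_dist_centroid[OF image_ne] by (simp add: n_def \<mu>'_def)
  with approx have near_image: "n * (norm (m - \<mu>'))\<^sup>2 \<le> \<delta> * Delta (image_mset f X)"
    by (simp add: algebra_simps)
  have centroid_shift: "n * (norm (\<mu>' - \<mu>))\<^sup>2 \<le> E"
    using size_mult_dist_centroid_image_le[OF assms(1)] by (simp add: n_def E_def \<mu>_def \<mu>'_def)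
  have "n * (norm (m - \<mu>))\<^sup>2 \<le> n * (2 * (norm (m - \<mu>'))\<^sup>2 + 2 * (norm (\<mu>' - \<mu>))\<^sup>2)"
    using norm_add_squared_le[of "m - \<mu>'" "\<mu>' - \<mu>"] \<open>n \<ge> 0\<close> by (simp add: mult_left_mono)
  also have "\<dots> \<le> 2 * \<delta> * Delta (image_mset f X) + 2 * E"
    using near_image centroid_shift by (simp add: algebra_simps)
  also have "\<dots> \<le> 2 * \<delta> * (2 * Delta X + 2 * E) + 2 * E"
    using Delta_image_le[OF assms(1), of f] \<open>0 \<le> \<delta>\<close> by (simp add: E_def mult_left_mono)
  finally have "n * (norm (m - \<mu>))\<^sup>2 \<le> 4 * \<delta> * Delta X + (2 + 4 * \<delta>) * E"
    by (simp add: algebra_simps)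
  moreover have "Phi_pt m X = Delta X + n * (norm (m - \<mu>))\<^sup>2"
    using Phi_pt_eq_Delta_plus_dist_centroid[OF assms(1)] by (simp add: n_def \<mu>_def)
  ultimately show ?thesis by (simp add: E_def algebra_simps)
qed

theorem mainTheorem8:
  fixes \<epsilon> OPT :: real and k :: nat
    and X :: "'a::euclidean_space multiset" and C :: "'a set"
    and c :: "'a \<Rightarrow> 'a" and m :: 'a
  assumes "0 < \<epsilon>" and "\<epsilon> \<le> 1/2" and "0 < k" and "0 \<le> OPT"
    and "X \<noteq> {#}" and "finite C" and "C \<noteq> {}"
    and "Phi_set C X \<le> \<epsilon> / (6 * real k) * OPT"
    and "\<forall>x\<in>#X. c x \<in> C \<and> (\<forall>z\<in>C. norm (x - c x) \<le> norm (x - z))"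
    and "Phi_pt m (image_mset c X) \<le> (1 + \<epsilon>/8) * Delta (image_mset c X)"
  shows "Phi_pt m X \<le> (1 + \<epsilon>/2) * Delta X + \<epsilon> / (2 * real k) * OPT"
proof -
  define E where "E = (\<Sum>x\<in>#X. (norm (x - c x))\<^sup>2)"
  have "E = Phi_set C X"
    using Phi_set_eq_nearest[OF assms(6,9)] by (simp add: E_def)
  have "0 \<le> E" unfolding E_def by (induction X) auto
  have "Phi_pt m X \<le> (1 + \<epsilon>/2) * Delta X + (2 + \<epsilon>/2) * E"
    using Phi_pt_le_of_approx_optimal_for_image[OF assms(5) _ assms(10)] assms(1)
    by (simp add: E_def)
  also have "(2 + \<epsilon>/2) * E \<le> 3 * E"
    using assms(2) \<open>0 \<le> E\<close> by (simp add: mult_right_mono)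
  also have "3 * E \<le> \<epsilon> / (2 * real k) * OPT"
    using assms(8) \<open>E = Phi_set C X\<close> by simp
  finally show ?thesis by simp
qed

end
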